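(* For every $u,v\in\mathfrak{U}(\mathbb{R})$, $$\int^*Du(x)v(x)\,dx=-\int^*u(x)Dv(x)\,dx+\left[u(x)v(x)\right]_{-\beta}^{\beta},$$ where $[uv]_{-\beta}^{\beta}=u(\beta)v(\beta)-u(-\beta)v(-\beta)$.
   Context: Framework (Λ-limits / nonstandard analysis): $\mathfrak{X}=\mathcal{P}_{fin}(\mathfrak{F}(\mathbb{R},\mathbb{R}))$ directed by inclusion; $\mathbb{R}^*\supset\mathbb{R}$ is a non-Archimedean ordered field of Λ-limits of nets $\mathfrak{X}\to\mathbb{R}$; internal sets/functions, natural extensions $E^*,f^*$, hyperfinite sums are defined via Λ-limits; $\int^*$ is the natural extension of the Lebesgue integral. For $\lambda\in\mathfrak{X}$, $V_\lambda$ is the span of $\lambda$; an internal $u=\lim_{\lambda\uparrow\Lambda}u_\lambda$ is an ultrafunction if $u_\lambda\in V_\lambda$ for all $\lambda$; for a vector space $W$ of real functions, $\widetilde{W}=W^*\cap\{\text{ultrafunctions}\}$. Grid: a positive infinite $\beta\in\mathbb{R}^*$, a hyperfinite $\Gamma=\{\gamma_0<\dots<\gamma_\ell\}\subset\mathbb{R}^*$ with $\gamma_0=-\beta$, $\gamma_\ell=\beta$, $0<\gamma_{j+1}-\gamma_j<\eta$ for a fixed infinitesimal $\eta$, and $\mathbb{R}\subseteq\Gamma$; $\mathbb{I}_j=(\gamma_j,\gamma_{j+1})_{\mathbb{R}^*}$ with characteristic function $\chi_j$. $\mathfrak{U}(\mathbb{R})$: functions $u:[-\beta,\beta]\to\mathbb{R}^*$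 of the form $\sum_{j=0}^{\ell-1}v_j\chi_j$ with $v_j\in\widetilde{\mathcal{C}^1(\mathbb{R})}$, equipped with the $L^2$ inner product $\int^*uv\,dx$. $u(\gamma_j^\pm)$ are the internal one-sided limits at grid points; values at grid points: $u(\gamma_j)=\tfrac12(u(\gamma_j^+)+u(\gamma_j^-))$ for $1\le j\le\ell-1$, $u(-\beta)=u(\gamma_0^+)$, $u(\beta)=u(\gamma_\ell^-)$. For $q\in[-\beta,\beta]$, $\delta_q$ is the unique element of $\mathfrak{U}(\mathbb{R})$ with $\int^*w\delta_q=w(q)$ for all $w\in\mathfrak{U}(\mathbb{R})$. Derivative: for $u=\sum_j v_j\chi_j\in\mathfrak{U}(\mathbb{R})$, $u'$ denotes the piecewise derivative $\sum_j v_j'\chi_j$, $P_{\mathfrak{U}}$ is the orthogonal projection onto $\mathfrak{U}(\mathbb{R})$ in $[L^2]^*$, $\triangle u(\gamma_j)=u(\gamma_j^+)-u(\gamma_j^-)$, and $Du=P_{\mathfrak{U}}u'+\sum_{j=1}^{\ell-1}\triangle u(\gamma_j)\delta_{\gamma_j}$. *)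

theory Defs
  imports "HOL-Analysis.Analysis"
begin

text \<open>Net-level (Lambda-limit) rendering of the ultrafunction framework.
  Index set of nets: finite subsets of F(R,R), represented by the type
  (real => real) set together with the requirement that the net filter is
  concentrated on finite sets.\<close>

type_synonym idx = "(real \<Rightarrow> real) set"

definition fine_ultrafilter :: "idx filter \<Rightarrow> bool" where
  "fine_ultrafilter F \<longleftrightarrow>
     F \<noteq> bot \<and>
     (\<forall>P. eventually P F \<or> eventually (\<lambda>l. \<not> P l) F) \<and>
     eventually finite F \<and>
     (\<forall>\<mu>. finite \<mu> \<longrightarrow> eventually (\<lambda>l. \<mu> \<subseteq> l) F)"

text \<open>The ultrafilter defining the Lambda-limit; two nets have the same
  Lambda-limit iff they agree eventually w.r.t. Lam.\<close>
definition Lam :: "idx filter" where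
  "Lam = (SOME F. fine_ultrafilter F)"

definition fspan :: "(real \<Rightarrow> real) set \<Rightarrow> (real \<Rightarrow> real) set" where
  "fspan S = {f. \<exists>T c. finite T \<and> T \<subseteq> S \<and> f = (\<lambda>x. \<Sum>g\<in>T. c g * g x)}"

definition UU :: "idx \<Rightarrow> (nat \<Rightarrow> real) \<Rightarrow> nat \<Rightarrow> (real \<Rightarrow> real) set" where
  "UU lam \<gamma> l = {f. \<exists>vs. (\<forall>j<l. vs j \<in> fspan lam \<and> vs j C1_differentiable_on UNIV) \<and>
       f = (\<lambda>x. \<Sum>j<l. vs j x * indicator {\<gamma> j<..<\<gamma> (Suc j)} x)}"

text \<open>Integral over [gamma 0, gamma l] = [-beta, beta].\<close>
definition gint :: "(nat \<Rightarrow> real) \<Rightarrow> nat \<Rightarrow> (real \<Rightarrow> real) \<Rightarrow> real" where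
  "gint \<gamma> l f = set_lebesgue_integral lborel {\<gamma> 0..\<gamma> l} f"

definition rlim :: "(real \<Rightarrow> real) \<Rightarrow> real \<Rightarrow> real" where
  "rlim u x = Lim (at_right x) u"

definition llim :: "(real \<Rightarrow> real) \<Rightarrow> real \<Rightarrow> real" where
  "llim u x = Lim (at_left x) u"

definition uval :: "(nat \<Rightarrow> real) \<Rightarrow> nat \<Rightarrow> (real \<Rightarrow> real) \<Rightarrow> real \<Rightarrow> real" where
  "uval \<gamma> l u q =
     (if q = \<gamma> 0 then rlim u q
      else if q = \<gamma> l then llim u q
      else if (\<exists>j. 0 < j \<and> j < l \<and> q = \<gamma> j) then (rlim u q + llim u q) / 2
      else u q)"

definition jump :: "(real \<Rightarrow> real) \<Rightarrow> real \<Rightarrow> real" where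
  "jump u x = rlim u x - llim u x"

definition delta :: "idx \<Rightarrow> (nat \<Rightarrow> real) \<Rightarrow> nat \<Rightarrow> real \<Rightarrow> (real \<Rightarrow> real)" where
  "delta lam \<gamma> l q = (THE d. d \<in> UU lam \<gamma> l \<and>
      (\<forall>w\<in>UU lam \<gamma> l. gint \<gamma> l (\<lambda>x. w x * d x) = uval \<gamma> l w q))"

definition projU :: "idx \<Rightarrow> (nat \<Rightarrow> real) \<Rightarrow> nat \<Rightarrow> (real \<Rightarrow> real) \<Rightarrow> (real \<Rightarrow> real)" where
  "projU lam \<gamma> l w = (THE p. p \<in> UU lam \<gamma> l \<and>
      (\<forall>v\<in>UU lam \<gamma> l. gint \<gamma> l (\<lambda>x. p x * v x) = gint \<gamma> l (\<lambda>x. w x * v x)))"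

text \<open>Piecewise derivative sum_j v_j' chi_j (on each open cell u coincides with v_j).\<close>
definition pderiv :: "(nat \<Rightarrow> real) \<Rightarrow> nat \<Rightarrow> (real \<Rightarrow> real) \<Rightarrow> real \<Rightarrow> real" where
  "pderiv \<gamma> l u x = (\<Sum>j<l. deriv u x * indicator {\<gamma> j<..<\<gamma> (Suc j)} x)"

definition DD :: "idx \<Rightarrow> (nat \<Rightarrow> real) \<Rightarrow> nat \<Rightarrow> (real \<Rightarrow> real) \<Rightarrow> (real \<Rightarrow> real)" where
  "DD lam \<gamma> l u = (\<lambda>x. projU lam \<gamma> l (pderiv \<gamma> l u) x +
      (\<Sum>j\<in>{1..<l}. jump u (\<gamma> j) * delta lam \<gamma> l (\<gamma> j) x))"

definition grid_ok :: "(idx \<Rightarrow> real) \<Rightarrow> (idx \<Rightarrow> real) \<Rightarrow> (idx \<Rightarrow> nat \<Rightarrow> real) \<Rightarrow> (idx \<Rightarrow> nat) \<Rightarrow> bool" where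
  "grid_ok \<beta> \<eta> \<gamma> l \<longleftrightarrow>
     (\<forall>n::nat. eventually (\<lambda>a. real n < \<beta> a) Lam) \<and>
     eventually (\<lambda>a. 0 < \<eta> a) Lam \<and>
     (\<forall>n::nat. eventually (\<lambda>a. \<eta> a < 1 / real (Suc n)) Lam) \<and>
     eventually (\<lambda>a. \<gamma> a 0 = - \<beta> a \<and> \<gamma> a (l a) = \<beta> a \<and>
        (\<forall>j<l a. 0 < \<gamma> a (Suc j) - \<gamma> a j \<and> \<gamma> a (Suc j) - \<gamma> a j < \<eta> a)) Lam \<and>
     (\<forall>r::real. eventually (\<lambda>a. \<exists>j\<le>l a. \<gamma> a j = r) Lam)"

end

theory Submission
  imports Defs
begin

(* At every level of the net the space U is finite-dimensional: it is spanned by the functions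
   g * chi_j with g in the level and j a cell, and the L2 product is positive definite on it.
   Hence delta_q and the orthogonal projection onto U exist (Riesz representation, proved by
   induction on a spanning family), and pairing Du with v gives the cellwise integrals of u_j' v_j
   plus, at each inner grid point, the jump of u times the mean value of v.  Adding the same
   expression with u and v exchanged, the fundamental theorem of calculus on each cell and the
   identity (a1 - a0)(b1 + b0)/2 + (b1 - b0)(a1 + a0)/2 = a1 b1 - a0 b0 at each inner grid point
   make everything telescope to the boundary terms at -beta and beta.  This holds at every level
   that is a finite set, which is Lambda-eventually the case once a fine ultrafilter is known
   to exist; that follows from Zorn's lemma. *)

section \<open>Existence of fine ultrafilters\<close>

definition proper_set_filter :: "'a set set \<Rightarrow> bool" where
  "proper_set_filter E \<longleftrightarrow>
     UNIV \<in> E \<and> {} \<notin> E \<and> (\<forall>S\<in>E. \<forall>T\<in>E. S \<inter> T \<in> E) \<and> (\<forall>S\<in>E. \<forall>T. S \<subseteq> T \<longrightarrow> T \<in> E)"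

lemma proper_set_filterD:
  assumes "proper_set_filter E"
  shows "UNIV \<in> E" "{} \<notin> E" "S \<in> E \<Longrightarrow> T \<in> E \<Longrightarrow> S \<inter> T \<in> E"
    "S \<in> E \<Longrightarrow> S \<subseteq> T \<Longrightarrow> T \<in> E"
  using assms unfolding proper_set_filter_def by blast+

lemma proper_set_filterI:
  assumes "UNIV \<in> E" "{} \<notin> E" "\<And>S T. S \<in> E \<Longrightarrow> T \<in> E \<Longrightarrow> S \<inter> T \<in> E"
    "\<And>S T. S \<in> E \<Longrightarrow> S \<subseteq> T \<Longrightarrow> T \<in> E"
  shows "proper_set_filter E"
  using assms unfolding proper_set_filter_def by blast

lemma proper_set_filter_Union_chain:
  assumes "subset.chain {E. proper_set_filter E} C" "C \<noteq> {}"
  shows "proper_set_filter (\<Union>C)"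
proof (rule proper_set_filterI)
  have C: "\<And>X. X \<in> C \<Longrightarrow> proper_set_filter X" "\<And>X Y. X \<in> C \<Longrightarrow> Y \<in> C \<Longrightarrow> X \<subseteq> Y \<or> Y \<subseteq> X"
    using assms(1) by (auto simp: subset_chain_def)
  show "UNIV \<in> \<Union>C" "{} \<notin> \<Union>C"
    using assms(2) C(1) proper_set_filterD(1,2) by blast+
  show "S \<inter> T \<in> \<Union>C" if "S \<in> \<Union>C" "T \<in> \<Union>C" for S T
  proof -
    from that obtain X Y where "S \<in> X" "T \<in> Y" "X \<in> C" "Y \<in> C"
      by blast
    with C show ?thesis
      by (metis UnionI proper_set_filterD(3) subsetD)
  qed
  show "T \<in> \<Union>C" if "S \<in> \<Union>C" "S \<subseteq> T" for S T
    using that C(1) proper_set_filterD(4) by blast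
qed

lemma maximal_proper_set_filter_ultra:
  assumes E: "proper_set_filter E"
    and max: "\<And>E'. proper_set_filter E' \<Longrightarrow> E \<subseteq> E' \<Longrightarrow> E' = E"
  shows "P \<in> E \<or> - P \<in> E"
proof (rule disjCI)
  assume "- P \<notin> E"
  then have meets: "S \<inter> P \<noteq> {}" if "S \<in> E" for S
    using proper_set_filterD(4)[OF E that, of "- P"] by blast
  define E' where "E' = {T. \<exists>S\<in>E. S \<inter> P \<subseteq> T}"
  have "proper_set_filter E'"
  proof (rule proper_set_filterI)
    show "UNIV \<in> E'"
      using proper_set_filterD(1)[OF E] unfolding E'_def by blast
    show "{} \<notin> E'"
      using meets unfolding E'_def by blast
    show "S \<inter> T \<in> E'" if ST: "S \<in> E'" "T \<in> E'" for S T
    proof -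
      obtain S' T' where "S' \<in> E" "S' \<inter> P \<subseteq> S" "T' \<in> E" "T' \<inter> P \<subseteq> T"
        using ST unfolding E'_def by blast
      moreover have "S' \<inter> T' \<in> E"
        using proper_set_filterD(3)[OF E] calculation by blast
      ultimately show ?thesis
        unfolding E'_def by blast
    qed
    show "T \<in> E'" if "S \<in> E'" "S \<subseteq> T" for S T
      using that unfolding E'_def by blast
  qed
  moreover have "E \<subseteq> E'"
    unfolding E'_def by blast
  ultimately have "E' = E"
    by (rule max)
  moreover have "P \<in> E'"
    using proper_set_filterD(1)[OF E] unfolding E'_def by blast
  ultimately show "P \<in> E"
    by simp
qed

lemma ex_ultrafilter_extending:
  assumes E0: "proper_set_filter E0"
  shows "\<exists>F. F \<noteq> bot \<and> (\<forall>P. eventually P F \<or> eventually (\<lambda>x. \<not> P x) F) \<and>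
           (\<forall>S\<in>E0. eventually (\<lambda>x. x \<in> S) F)"
proof -
  have "\<exists>E\<in>{E. proper_set_filter E \<and> E0 \<subseteq> E}.
          \<forall>E'\<in>{E. proper_set_filter E \<and> E0 \<subseteq> E}. E \<subseteq> E' \<longrightarrow> E' = E"
  proof (rule subset_Zorn_nonempty)
    fix C assume C: "C \<noteq> {}" "subset.chain {E. proper_set_filter E \<and> E0 \<subseteq> E} C"
    then have "subset.chain {E. proper_set_filter E} C"
      by (auto simp: subset_chain_def)
    then have "proper_set_filter (\<Union>C)"
      using C(1) by (rule proper_set_filter_Union_chain)
    moreover obtain X where "X \<in> C"
      using C(1) by blast
    then have "E0 \<subseteq> \<Union>C"
      using C(2) by (auto simp: subset_chain_def)
    ultimately show "\<Union>C \<in> {E. proper_set_filter E \<and> E0 \<subseteq> E}"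
      by blast
  qed (use E0 in blast)
  then obtain E where E: "proper_set_filter E" "E0 \<subseteq> E"
    and max: "\<And>E'. proper_set_filter E' \<Longrightarrow> E \<subseteq> E' \<Longrightarrow> E' = E"
    by auto
  have "is_filter (\<lambda>P. {x. P x} \<in> E)"
  proof
    show "{x. True} \<in> E"
      using proper_set_filterD(1)[OF E(1)] by simp
    show "{x. P x \<and> Q x} \<in> E" if "{x. P x} \<in> E" "{x. Q x} \<in> E" for P Q
      using proper_set_filterD(3)[OF E(1) that] by (simp add: Collect_conj_eq)
    show "{x. Q x} \<in> E" if "\<forall>x. P x \<longrightarrow> Q x" "{x. P x} \<in> E" for P Q
      using proper_set_filterD(4)[OF E(1) that(2)] that(1) by blast
  qed
  then have ev: "eventually P (Abs_filter (\<lambda>P. {x. P x} \<in> E)) \<longleftrightarrow> {x. P x} \<in> E" for P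
    by (simp add: eventually_Abs_filter)
  have "Abs_filter (\<lambda>P. {x. P x} \<in> E) \<noteq> bot"
    using proper_set_filterD(2)[OF E(1)] by (simp add: trivial_limit_def ev)
  moreover have "{x. P x} \<in> E \<or> {x. \<not> P x} \<in> E" for P
    using maximal_proper_set_filter_ultra[OF E(1) max, of "{x. P x}"] by (simp add: Collect_neg_eq)
  ultimately show ?thesis
    using E(2) by (intro exI[of _ "Abs_filter (\<lambda>P. {x. P x} \<in> E)"]) (auto simp: ev)
qed

lemma ex_fine_ultrafilter: "\<exists>F. fine_ultrafilter F"
proof -
  define E0 :: "idx set set" where "E0 = {T. \<exists>\<mu>. finite \<mu> \<and> {l. finite l \<and> \<mu> \<subseteq> l} \<subseteq> T}"
  have E0I: "T \<in> E0" if "finite \<mu>" "{l. finite l \<and> \<mu> \<subseteq> l} \<subseteq> T" for \<mu> T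
    unfolding E0_def using that by blast
  have E0E: "\<exists>\<mu>. finite \<mu> \<and> {l. finite l \<and> \<mu> \<subseteq> l} \<subseteq> T" if "T \<in> E0" for T
    using that unfolding E0_def by blast
  have "proper_set_filter E0"
  proof (rule proper_set_filterI)
    show "UNIV \<in> E0"
      by (rule E0I[of "{}"]) simp_all
    show "{} \<notin> E0"
    proof
      assume "{} \<in> E0"
      then obtain \<mu> where "finite \<mu>" "{l. finite l \<and> \<mu> \<subseteq> l} \<subseteq> {}"
        using E0E by blast
      then show False
        by blast
    qed
    show "S \<inter> T \<in> E0" if ST: "S \<in> E0" "T \<in> E0" for S T
    proof -
      obtain \<mu> \<nu> where "finite \<mu>" "{l. finite l \<and> \<mu> \<subseteq> l} \<subseteq> S" "finite \<nu>" "{l. finite l \<and> \<nu> \<subseteq> l} \<subseteq> T"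
        using E0E[OF ST(1)] E0E[OF ST(2)] by blast
      then show ?thesis
        by (intro E0I[of "\<mu> \<union> \<nu>"]) auto
    qed
    show "T \<in> E0" if "S \<in> E0" "S \<subseteq> T" for S T
      using E0E[OF that(1)] that(2) E0I by (meson order_trans)
  qed
  then obtain F where F: "F \<noteq> bot" "\<forall>P. eventually P F \<or> eventually (\<lambda>x. \<not> P x) F"
    and ev_E0: "\<forall>S\<in>E0. eventually (\<lambda>x. x \<in> S) F"
    by (blast dest: ex_ultrafilter_extending)
  have "{l. finite l} \<in> E0"
    by (rule E0I[of "{}"]) auto
  then have "eventually finite F"
    using ev_E0 by fastforce
  moreover have "eventually (\<lambda>l. \<mu> \<subseteq> l) F" if "finite \<mu>" for \<mu>
  proof -
    have "{l. \<mu> \<subseteq> l} \<in> E0"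
      using that by (rule E0I) auto
    then show ?thesis
      using ev_E0 by fastforce
  qed
  ultimately show ?thesis
    using F unfolding fine_ultrafilter_def by blast
qed

lemma eventually_finite_Lam: "eventually finite Lam"
  using someI_ex[OF ex_fine_ultrafilter] unfolding Lam_def fine_ultrafilter_def by blast

section \<open>Riesz representation in finite-dimensional function spaces\<close>

definition function_subspace :: "('a \<Rightarrow> real) set \<Rightarrow> bool" where
  "function_subspace V \<longleftrightarrow> (\<lambda>x. 0) \<in> V \<and> (\<forall>f\<in>V. \<forall>g\<in>V. \<forall>c. (\<lambda>x. f x + c * g x) \<in> V)"

definition fun_span :: "'i set \<Rightarrow> ('i \<Rightarrow> 'a \<Rightarrow> real) \<Rightarrow> ('a \<Rightarrow> real) set" where
  "fun_span I \<phi> = {f. \<exists>c. f = (\<lambda>x. \<Sum>i\<in>I. c i * \<phi> i x)}"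

definition symmetric_bilinear_on ::
    "('a \<Rightarrow> real) set \<Rightarrow> (('a \<Rightarrow> real) \<Rightarrow> ('a \<Rightarrow> real) \<Rightarrow> real) \<Rightarrow> bool" where
  "symmetric_bilinear_on V B \<longleftrightarrow>
     (\<forall>f\<in>V. \<forall>g\<in>V. \<forall>h\<in>V. \<forall>c. B (\<lambda>x. f x + c * g x) h = B f h + c * B g h) \<and>
     (\<forall>f\<in>V. \<forall>g\<in>V. B f g = B g f)"

definition linear_functional_on :: "('a \<Rightarrow> real) set \<Rightarrow> (('a \<Rightarrow> real) \<Rightarrow> real) \<Rightarrow> bool" where
  "linear_functional_on V L \<longleftrightarrow> (\<forall>f\<in>V. \<forall>g\<in>V. \<forall>c. L (\<lambda>x. f x + c * g x) = L f + c * L g)"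

definition positive_definite_on ::
    "('a \<Rightarrow> real) set \<Rightarrow> (('a \<Rightarrow> real) \<Rightarrow> ('a \<Rightarrow> real) \<Rightarrow> real) \<Rightarrow> bool" where
  "positive_definite_on V B \<longleftrightarrow> (\<forall>f\<in>V. f \<noteq> (\<lambda>x. 0) \<longrightarrow> 0 < B f f)"

lemma function_subspace_zero: "function_subspace V \<Longrightarrow> (\<lambda>x. 0) \<in> V"
  unfolding function_subspace_def by blast

lemma function_subspace_lincomb:
  "function_subspace V \<Longrightarrow> f \<in> V \<Longrightarrow> g \<in> V \<Longrightarrow> (\<lambda>x. f x + c * g x) \<in> V"
  unfolding function_subspace_def by blast

lemma function_subspace_Int:
  "function_subspace V \<Longrightarrow> function_subspace W \<Longrightarrow> function_subspace (V \<inter> W)"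
  unfolding function_subspace_def by blast

lemma function_subspace_fun_span: "function_subspace (fun_span I \<phi>)"
  unfolding function_subspace_def
proof (intro conjI ballI allI)
  show "(\<lambda>x. 0) \<in> fun_span I \<phi>"
    unfolding fun_span_def by (intro CollectI exI[of _ "\<lambda>i. 0"]) simp
  fix f g c assume "f \<in> fun_span I \<phi>" "g \<in> fun_span I \<phi>"
  then obtain a b where "f = (\<lambda>x. \<Sum>i\<in>I. a i * \<phi> i x)" "g = (\<lambda>x. \<Sum>i\<in>I. b i * \<phi> i x)"
    unfolding fun_span_def by blast
  then show "(\<lambda>x. f x + c * g x) \<in> fun_span I \<phi>"
    unfolding fun_span_def
    by (intro CollectI exI[of _ "\<lambda>i. a i + c * b i"])
      (simp add: sum.distrib sum_distrib_left algebra_simps)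
qed

lemma symmetric_bilinear_on_left:
  "symmetric_bilinear_on V B \<Longrightarrow> f \<in> V \<Longrightarrow> g \<in> V \<Longrightarrow> h \<in> V \<Longrightarrow>
    B (\<lambda>x. f x + c * g x) h = B f h + c * B g h"
  unfolding symmetric_bilinear_on_def by blast

lemma symmetric_bilinear_on_sym:
  "symmetric_bilinear_on V B \<Longrightarrow> f \<in> V \<Longrightarrow> g \<in> V \<Longrightarrow> B f g = B g f"
  unfolding symmetric_bilinear_on_def by blast

lemma symmetric_bilinear_on_right:
  assumes "symmetric_bilinear_on V B" "function_subspace V" "f \<in> V" "g \<in> V" "h \<in> V"
  shows "B h (\<lambda>x. f x + c * g x) = B h f + c * B h g"
proof -
  have "(\<lambda>x. f x + c * g x) \<in> V"
    using assms(2-4) by (rule function_subspace_lincomb)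
  then have "B h (\<lambda>x. f x + c * g x) = B (\<lambda>x. f x + c * g x) h"
    using symmetric_bilinear_on_sym[OF assms(1,5)] by blast
  also have "\<dots> = B f h + c * B g h"
    using assms(1,3-5) by (rule symmetric_bilinear_on_left)
  finally show ?thesis
    using symmetric_bilinear_on_sym[OF assms(1,3,5)] symmetric_bilinear_on_sym[OF assms(1,4,5)] by simp
qed

lemma symmetric_bilinear_on_subset:
  "symmetric_bilinear_on V B \<Longrightarrow> W \<subseteq> V \<Longrightarrow> symmetric_bilinear_on W B"
  unfolding symmetric_bilinear_on_def by blast

lemma positive_definite_on_subset:
  "positive_definite_on V B \<Longrightarrow> W \<subseteq> V \<Longrightarrow> positive_definite_on W B"
  unfolding positive_definite_on_def by blast

lemma linear_functional_on_subset:
  "linear_functional_on V L \<Longrightarrow> W \<subseteq> V \<Longrightarrow> linear_functional_on W L"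
  unfolding linear_functional_on_def by blast

lemma linear_functional_on_zero:
  assumes "linear_functional_on V L" "function_subspace V"
  shows "L (\<lambda>x. 0) = 0"
proof -
  have z: "(\<lambda>x. 0) \<in> V"
    using assms(2) by (rule function_subspace_zero)
  have "\<forall>c. L (\<lambda>x. 0 + c * 0) = L (\<lambda>x. 0) + c * L (\<lambda>x. 0)"
    using bspec[OF bspec[OF assms(1)[unfolded linear_functional_on_def] z] z] .
  from this[rule_format, of 1] show ?thesis
    by simp
qed

lemma fun_span_insert_reduce:
  assumes "finite I" "i \<notin> I" "t \<in> fun_span (insert i I) \<phi>" "t \<notin> fun_span I \<phi>"
    "w \<in> fun_span (insert i I) \<phi>"
  shows "\<exists>m. (\<lambda>x. w x + m * t x) \<in> fun_span I \<phi>"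
proof -
  obtain c where c: "t = (\<lambda>x. \<Sum>k\<in>insert i I. c k * \<phi> k x)"
    using assms(3) unfolding fun_span_def by blast
  obtain a where a: "w = (\<lambda>x. \<Sum>k\<in>insert i I. a k * \<phi> k x)"
    using assms(5) unfolding fun_span_def by blast
  have "c i \<noteq> 0"
  proof
    assume "c i = 0"
    then have "t = (\<lambda>x. \<Sum>k\<in>I. c k * \<phi> k x)"
      using c assms(1,2) by simp
    then show False
      using assms(4) unfolding fun_span_def by blast
  qed
  define m where "m = - a i / c i"
  have "a i + m * c i = 0"
    using \<open>c i \<noteq> 0\<close> unfolding m_def by simp
  then have zero: "a i * \<phi> i x + m * (c i * \<phi> i x) = 0" for x
    by (metis distrib_right mult.assoc mult_zero_left)
  have "w x + m * t x = (\<Sum>k\<in>I. (a k + m * c k) * \<phi> k x)" for x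
  proof -
    have "w x + m * t x = (a i * \<phi> i x + m * (c i * \<phi> i x))
        + ((\<Sum>k\<in>I. a k * \<phi> k x) + m * (\<Sum>k\<in>I. c k * \<phi> k x))"
      using assms(1,2) unfolding a c by (simp add: algebra_simps)
    also have "\<dots> = (\<Sum>k\<in>I. (a k + m * c k) * \<phi> k x)"
      unfolding zero by (simp add: sum.distrib sum_distrib_left algebra_simps)
    finally show ?thesis .
  qed
  then have "(\<lambda>x. w x + m * t x) = (\<lambda>x. \<Sum>k\<in>I. (a k + m * c k) * \<phi> k x)"
    by (rule ext)
  then show ?thesis
    unfolding fun_span_def by (intro exI[of _ m] CollectI exI[of _ "\<lambda>k. a k + m * c k"])
qed

lemma orthogonal_direction_exists:
  assumes sub: "function_subspace V" and "V' \<subseteq> V" and bil: "symmetric_bilinear_on V B"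
    and t0: "t0 \<in> V" "t0 \<notin> V'"
    and reduce: "\<And>w. w \<in> V \<Longrightarrow> \<exists>m. (\<lambda>x. w x + m * t0 x) \<in> V'"
    and sub': "function_subspace V'"
    and repr: "\<And>L. linear_functional_on V' L \<Longrightarrow> \<exists>d\<in>V'. \<forall>w\<in>V'. B w d = L w"
  obtains t where "t \<in> V" "t \<noteq> (\<lambda>x. 0)" "\<And>w. w \<in> V' \<Longrightarrow> B w t = 0"
    "\<And>w. w \<in> V \<Longrightarrow> \<exists>m. (\<lambda>x. w x + m * t x) \<in> V'"
proof -
  have "linear_functional_on V' (\<lambda>w. B w t0)"
    unfolding linear_functional_on_def
    using \<open>V' \<subseteq> V\<close> t0(1) by (blast intro: symmetric_bilinear_on_left[OF bil])
  then obtain e where e: "e \<in> V'" "\<And>w. w \<in> V' \<Longrightarrow> B w e = B w t0"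
    using repr by blast
  have "e \<in> V"
    using e(1) \<open>V' \<subseteq> V\<close> by blast
  define t where "t = (\<lambda>x. t0 x + (- 1) * e x)"
  show ?thesis
  proof
    show "t \<in> V"
      unfolding t_def using sub t0(1) \<open>e \<in> V\<close> by (rule function_subspace_lincomb)
    show "t \<noteq> (\<lambda>x. 0)"
    proof
      assume "t = (\<lambda>x. 0)"
      then have "t0 = e"
        unfolding t_def by (auto simp: fun_eq_iff)
      then show False
        using e(1) t0(2) by blast
    qed
    show "B w t = 0" if "w \<in> V'" for w
    proof -
      have "B w t = B w t0 + (- 1) * B w e"
        unfolding t_def using symmetric_bilinear_on_right[OF bil sub t0(1) \<open>e \<in> V\<close>] that \<open>V' \<subseteq> V\<close>
        by blast
      then show ?thesis
        using e(2)[OF that] by simp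
    qed
    show "\<exists>m. (\<lambda>x. w x + m * t x) \<in> V'" if wV: "w \<in> V" for w
    proof -
      obtain m where m: "(\<lambda>x. w x + m * t0 x) \<in> V'"
        using reduce[OF wV] by blast
      have "(\<lambda>x. w x + m * t x) = (\<lambda>x. (w x + m * t0 x) + (- m) * e x)"
        unfolding t_def by (simp add: algebra_simps)
      also have "\<dots> \<in> V'"
        using sub' m e(1) by (rule function_subspace_lincomb)
      finally show ?thesis
        by blast
    qed
  qed
qed

lemma riesz_representation_extend:
  assumes sub: "function_subspace V" and "V' \<subseteq> V" and bil: "symmetric_bilinear_on V B"
    and lin: "linear_functional_on V L"
    and t: "t \<in> V" "0 < B t t" "\<And>w. w \<in> V' \<Longrightarrow> B w t = 0"
    and reduce: "\<And>w. w \<in> V \<Longrightarrow> \<exists>m. (\<lambda>x. w x + m * t x) \<in> V'"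
    and d': "d' \<in> V'" "\<And>w. w \<in> V' \<Longrightarrow> B w d' = L w"
  shows "\<exists>d\<in>V. \<forall>w\<in>V. B w d = L w"
proof -
  have "d' \<in> V"
    using d'(1) \<open>V' \<subseteq> V\<close> by blast
  define k where "k = (L t - B t d') / B t t"
  define d where "d = (\<lambda>x. d' x + k * t x)"
  have "d \<in> V"
    unfolding d_def using sub \<open>d' \<in> V\<close> t(1) by (rule function_subspace_lincomb)
  have Btd: "B t d = L t"
  proof -
    have "B t d = B t d' + k * B t t"
      unfolding d_def using bil sub \<open>d' \<in> V\<close> t(1) t(1) by (rule symmetric_bilinear_on_right)
    then show ?thesis
      using t(2) unfolding k_def by simp
  qed
  have "B w d = L w" if wV: "w \<in> V" for w
  proof -
    obtain m where w': "(\<lambda>x. w x + m * t x) \<in> V'"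
      using reduce[OF wV] by blast
    define w' where "w' = (\<lambda>x. w x + m * t x)"
    have "w' \<in> V'" "w' \<in> V"
      using w' \<open>V' \<subseteq> V\<close> unfolding w'_def by auto
    have w: "w = (\<lambda>x. w' x + (- m) * t x)"
      unfolding w'_def by simp
    have "B w' d = B w' d' + k * B w' t"
      unfolding d_def using bil sub \<open>d' \<in> V\<close> t(1) \<open>w' \<in> V\<close> by (rule symmetric_bilinear_on_right)
    then have Bw'd: "B w' d = L w'"
      using d'(2) t(3) \<open>w' \<in> V'\<close> by simp
    have "B w d = B w' d + (- m) * B t d"
      unfolding w using bil \<open>w' \<in> V\<close> t(1) \<open>d \<in> V\<close> by (rule symmetric_bilinear_on_left)
    also have "\<dots> = L w' + (- m) * L t"
      using Bw'd Btd by simp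
    also have "\<dots> = L w"
    proof -
      have "L (\<lambda>x. w' x + (- m) * t x) = L w' + (- m) * L t"
        using lin \<open>w' \<in> V\<close> t(1) unfolding linear_functional_on_def by blast
      then show ?thesis
        using w by simp
    qed
    finally show ?thesis .
  qed
  then show ?thesis
    using \<open>d \<in> V\<close> by blast
qed

lemma riesz_representation_exists:
  assumes "finite I"
  shows "V \<subseteq> fun_span I \<phi> \<Longrightarrow> function_subspace V \<Longrightarrow> symmetric_bilinear_on V B \<Longrightarrow>
    positive_definite_on V B \<Longrightarrow> linear_functional_on V L \<Longrightarrow> \<exists>d\<in>V. \<forall>w\<in>V. B w d = L w"
  using assms
proof (induction I arbitrary: V L rule: finite_induct)
  case empty
  then have "V = {\<lambda>x. 0}"
    using function_subspace_zero by (auto simp: fun_span_def)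
  moreover have "B (\<lambda>x. 0) (\<lambda>x. 0) = 0"
    using symmetric_bilinear_on_left[OF empty(3), of "\<lambda>x. 0" "\<lambda>x. 0" "\<lambda>x. 0" 1] \<open>V = _\<close> by simp
  ultimately show ?case
    using linear_functional_on_zero[OF empty(5,2)] by simp
next
  case (insert i I)
  note span = insert.prems(1) and sub = insert.prems(2) and bil = insert.prems(3)
    and pos = insert.prems(4) and lin = insert.prems(5)
  show ?case
  proof (cases "V \<subseteq> fun_span I \<phi>")
    case True
    then show ?thesis
      by (rule insert.IH[OF _ sub bil pos lin])
  next
    case False
    then obtain t0 where t0: "t0 \<in> V" "t0 \<notin> fun_span I \<phi>"
      by blast
    define V' where "V' = V \<inter> fun_span I \<phi>"
    have "V' \<subseteq> V"
      unfolding V'_def by blast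
    have sub': "function_subspace V'"
      unfolding V'_def using sub function_subspace_fun_span by (rule function_subspace_Int)
    have repr: "\<exists>d\<in>V'. \<forall>w\<in>V'. B w d = L' w" if "linear_functional_on V' L'" for L'
      using insert.IH[OF _ sub' symmetric_bilinear_on_subset[OF bil \<open>V' \<subseteq> V\<close>]
          positive_definite_on_subset[OF pos \<open>V' \<subseteq> V\<close>] that]
      unfolding V'_def by blast
    have reduce: "\<exists>m. (\<lambda>x. w x + m * t0 x) \<in> V'" if "w \<in> V" for w
      using fun_span_insert_reduce[OF insert.hyps _ t0(2)] span that t0(1)
        function_subspace_lincomb[OF sub that t0(1)]
      unfolding V'_def by blast
    have "t0 \<notin> V'"
      using t0(2) unfolding V'_def by blast
    then obtain t where t: "t \<in> V" "t \<noteq> (\<lambda>x. 0)"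
      "\<And>w. w \<in> V' \<Longrightarrow> B w t = 0" "\<And>w. w \<in> V \<Longrightarrow> \<exists>m. (\<lambda>x. w x + m * t x) \<in> V'"
      using orthogonal_direction_exists[OF sub \<open>V' \<subseteq> V\<close> bil t0(1) _ reduce sub' repr] by blast
    have "0 < B t t"
      using pos t(1,2) unfolding positive_definite_on_def by blast
    obtain d' where "d' \<in> V'" "\<And>w. w \<in> V' \<Longrightarrow> B w d' = L w"
      using repr linear_functional_on_subset[OF lin \<open>V' \<subseteq> V\<close>] by blast
    with sub \<open>V' \<subseteq> V\<close> bil lin t(1) \<open>0 < B t t\<close> t(3,4) show ?thesis
      by (rule riesz_representation_extend)
  qed
qed

lemma riesz_representation:
  assumes "finite I" "V \<subseteq> fun_span I \<phi>" "function_subspace V" "symmetric_bilinear_on V B"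
    "positive_definite_on V B" "linear_functional_on V L"
  shows "\<exists>!d. d \<in> V \<and> (\<forall>w\<in>V. B w d = L w)"
proof (rule ex_ex1I)
  show "\<exists>d. d \<in> V \<and> (\<forall>w\<in>V. B w d = L w)"
    using riesz_representation_exists[OF assms] by blast
  fix d1 d2 assume d1: "d1 \<in> V \<and> (\<forall>w\<in>V. B w d1 = L w)" and d2: "d2 \<in> V \<and> (\<forall>w\<in>V. B w d2 = L w)"
  define w where "w = (\<lambda>x. d1 x + (- 1) * d2 x)"
  have "w \<in> V"
    unfolding w_def using function_subspace_lincomb[OF assms(3)] d1 d2 by blast
  have "B w (\<lambda>x. d1 x + (- 1) * d2 x) = B w d1 + (- 1) * B w d2"
    using assms(4,3) conjunct1[OF d1] conjunct1[OF d2] \<open>w \<in> V\<close> by (rule symmetric_bilinear_on_right)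
  then have "B w w = B w d1 - B w d2"
    by (simp only: w_def[symmetric])
  then have "\<not> 0 < B w w"
    using d1 d2 \<open>w \<in> V\<close> by simp
  then have "w = (\<lambda>x. 0)"
    using assms(5) \<open>w \<in> V\<close> unfolding positive_definite_on_def by blast
  then show "d1 = d2"
    unfolding w_def by (auto simp: fun_eq_iff)
qed

lemma function_subspace_sum:
  assumes "function_subspace V" "finite J" "g \<in> V" "\<And>j. j \<in> J \<Longrightarrow> f j \<in> V"
  shows "(\<lambda>x. g x + (\<Sum>j\<in>J. c j * f j x)) \<in> V"
  using assms(2,4)
proof (induction J rule: finite_induct)
  case (insert i J)
  then have "(\<lambda>x. (g x + (\<Sum>j\<in>J. c j * f j x)) + c i * f i x) \<in> V"
    by (intro function_subspace_lincomb[OF assms(1)]) auto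
  then show ?case
    using insert.hyps by (simp add: algebra_simps)
qed (use assms(3) in simp)

lemma symmetric_bilinear_on_sum_left:
  assumes "function_subspace V" "symmetric_bilinear_on V B" "finite J" "g \<in> V"
    "\<And>j. j \<in> J \<Longrightarrow> f j \<in> V" "w \<in> V"
  shows "B (\<lambda>x. g x + (\<Sum>j\<in>J. c j * f j x)) w = B g w + (\<Sum>j\<in>J. c j * B (f j) w)"
  using assms(3,5)
proof (induction J rule: finite_induct)
  case (insert i J)
  have "(\<lambda>x. g x + (\<Sum>j\<in>J. c j * f j x)) \<in> V"
    using insert by (intro function_subspace_sum[OF assms(1) _ assms(4)]) auto
  then have "B (\<lambda>x. (g x + (\<Sum>j\<in>J. c j * f j x)) + c i * f i x) w
      = B (\<lambda>x. g x + (\<Sum>j\<in>J. c j * f j x)) w + c i * B (f i) w"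
    using insert.prems assms(6) by (intro symmetric_bilinear_on_left[OF assms(2)]) auto
  then show ?case
    using insert by (simp add: algebra_simps)
qed simp

lemma the_riesz_representation:
  assumes "finite I" "V \<subseteq> fun_span I \<phi>" "function_subspace V" "symmetric_bilinear_on V B"
    "positive_definite_on V B" "linear_functional_on V L"
  shows "(THE d. d \<in> V \<and> (\<forall>w\<in>V. B w d = L w)) \<in> V"
    "\<And>w. w \<in> V \<Longrightarrow> B w (THE d. d \<in> V \<and> (\<forall>w\<in>V. B w d = L w)) = L w"
  using theI'[OF riesz_representation[OF assms]] by blast+

lemma fspan_eq_fun_span: "finite S \<Longrightarrow> fspan S = fun_span S (\<lambda>g. g)"
proof
  assume "finite S"
  show "fspan S \<subseteq> fun_span S (\<lambda>g. g)"
  proof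
    fix f assume "f \<in> fspan S"
    then obtain T c where T: "finite T" "T \<subseteq> S" "f = (\<lambda>x. \<Sum>g\<in>T. c g * g x)"
      unfolding fspan_def by blast
    have "(\<Sum>g\<in>S. (if g \<in> T then c g else 0) * g x) = (\<Sum>g\<in>T. c g * g x)" for x
      using \<open>finite S\<close> T(2) by (simp add: if_distrib[of "\<lambda>a. a * _"] sum.If_cases Int_absorb1)
    then show "f \<in> fun_span S (\<lambda>g. g)"
      unfolding fun_span_def T(3) by (intro CollectI exI[of _ "\<lambda>g. if g \<in> T then c g else 0"]) auto
  qed
  show "fun_span S (\<lambda>g. g) \<subseteq> fspan S"
    unfolding fun_span_def fspan_def using \<open>finite S\<close> by blast
qed

section \<open>Calculus on compact intervals\<close>

lemma set_integral_open_interval: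
  fixes f :: "real \<Rightarrow> real"
  assumes "continuous_on {a..b} f"
  shows "set_integrable lborel {a<..<b} f" "(LINT x:{a<..<b}|lborel. f x) = integral {a..b} f"
proof -
  show int: "set_integrable lborel {a<..<b} f"
    using borel_integrable_atLeastAtMost'[OF assms] by (rule set_integrable_subset) auto
  show "(LINT x:{a<..<b}|lborel. f x) = integral {a..b} f"
    using set_borel_integral_eq_integral(2)[OF int] by (simp add: integral_open_interval_real)
qed

lemma integral_lincomb_mult:
  fixes f g h :: "real \<Rightarrow> real"
  assumes "continuous_on {a..b} f" "continuous_on {a..b} g" "continuous_on {a..b} h"
  shows "integral {a..b} (\<lambda>x. (f x + c * g x) * h x)
    = integral {a..b} (\<lambda>x. f x * h x) + c * integral {a..b} (\<lambda>x. g x * h x)"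
proof -
  have "(\<lambda>x. f x * h x) integrable_on {a..b}" "(\<lambda>x. c * (g x * h x)) integrable_on {a..b}"
    using assms by (auto intro!: integrable_continuous_interval continuous_intros)
  then show ?thesis
    by (simp add: distrib_right mult.assoc integral_add)
qed

lemma continuous_square_integral_eq_0:
  fixes f :: "real \<Rightarrow> real"
  assumes "continuous_on {a..b} f" "a < b" "integral {a..b} (\<lambda>x. f x * f x) = 0" "x \<in> {a..b}"
  shows "f x = 0"
proof -
  have cont: "continuous_on (cbox a b) (\<lambda>x. f x * f x)"
    using assms(1) by (auto intro!: continuous_intros)
  then have "((\<lambda>x. f x * f x) has_integral 0) (cbox a b)"
    using assms(3) integrable_continuous_interval[of a b "\<lambda>x. f x * f x"]
    by (metis cbox_interval has_integral_integral)
  then have "f x * f x = 0"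
    using assms(2,4) by (intro has_integral_0_cbox_imp_0[OF cont]) auto
  then show ?thesis
    by simp
qed

lemma C1_differentiable_on_UNIV_D:
  fixes f :: "real \<Rightarrow> real"
  assumes "f C1_differentiable_on UNIV"
  shows "continuous_on UNIV f" "continuous_on UNIV (deriv f)"
    "\<And>x. (f has_real_derivative deriv f x) (at x)"
proof -
  obtain D where D: "\<And>x. (f has_vector_derivative D x) (at x)" "continuous_on UNIV D"
    using assms unfolding C1_differentiable_on_def by blast
  then have d: "(f has_real_derivative D x) (at x)" for x
    by (simp add: has_real_derivative_iff_has_vector_derivative)
  then have "deriv f = D"
    by (intro ext DERIV_imp_deriv)
  then show "continuous_on UNIV (deriv f)" "\<And>x. (f has_real_derivative deriv f x) (at x)"
    using D(2) d by auto
  show "continuous_on UNIV f"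
    using d by (meson DERIV_isCont continuous_at_imp_continuous_on)
qed

lemma integral_deriv_mult_add:
  fixes f g :: "real \<Rightarrow> real"
  assumes "a \<le> b" "f C1_differentiable_on UNIV" "g C1_differentiable_on UNIV"
  shows "integral {a..b} (\<lambda>x. deriv f x * g x) + integral {a..b} (\<lambda>x. deriv g x * f x)
    = f b * g b - f a * g a"
proof -
  note f = C1_differentiable_on_UNIV_D[OF assms(2)] and g = C1_differentiable_on_UNIV_D[OF assms(3)]
  have "((\<lambda>x. f x * g x) has_real_derivative deriv f x * g x + deriv g x * f x) (at x within {a..b})" for x
    using DERIV_mult[OF f(3) g(3)] by (rule has_field_derivative_at_within)
  then have "((\<lambda>x. deriv f x * g x + deriv g x * f x) has_integral f b * g b - f a * g a) {a..b}"
    using assms(1) by (intro fundamental_theorem_of_calculus)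
      (simp_all add: has_real_derivative_iff_has_vector_derivative)
  moreover have "(\<lambda>x. deriv f x * g x) integrable_on {a..b}" "(\<lambda>x. deriv g x * f x) integrable_on {a..b}"
    using f g by (auto intro!: integrable_continuous_interval continuous_intros intro: continuous_on_subset)
  ultimately show ?thesis
    by (simp add: integral_unique integral_add[symmetric])
qed

lemma sum_interleaved_telescope:
  fixes E S :: "nat \<Rightarrow> real"
  shows "(\<Sum>j<Suc m. E j - S j) + (\<Sum>j\<in>{1..<Suc m}. S j - E (j - 1)) = E m - S 0"
  by (induction m) simp_all

section \<open>Piecewise functions on a grid\<close>

locale grid =
  fixes \<gamma> :: "nat \<Rightarrow> real" and l :: nat
  assumes grid_less_Suc: "j < l \<Longrightarrow> \<gamma> j < \<gamma> (Suc j)"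
begin

abbreviation cell :: "nat \<Rightarrow> real set" where
  "cell j \<equiv> {\<gamma> j<..<\<gamma> (Suc j)}"

definition piecewise :: "(nat \<Rightarrow> real \<Rightarrow> real) \<Rightarrow> real \<Rightarrow> real" where
  "piecewise h = (\<lambda>x. \<Sum>j<l. h j x * indicator (cell j) x)"

lemma grid_le: "i \<le> j \<Longrightarrow> j \<le> l \<Longrightarrow> \<gamma> i \<le> \<gamma> j"
proof (induction j)
  case (Suc j)
  then show ?case
    using grid_less_Suc[of j] by (cases "i = Suc j") auto
qed simp

lemma grid_less:
  assumes "i < j" "j \<le> l"
  shows "\<gamma> i < \<gamma> j"
proof -
  obtain k where "j = Suc k"
    using assms(1) by (cases j) auto
  then show ?thesis
    using grid_le[of i k] grid_less_Suc[of k] assms by simp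
qed

lemma cell_unique:
  assumes "j < l" "k < l" "x \<in> cell j" "x \<in> cell k"
  shows "j = k"
proof (rule linorder_cases[of j k])
  assume "j < k"
  then have "\<gamma> (Suc j) \<le> \<gamma> k"
    using assms(2) by (intro grid_le) auto
  then show ?thesis
    using assms(3,4) by simp
next
  assume "k < j"
  then have "\<gamma> (Suc k) \<le> \<gamma> j"
    using assms(1) by (intro grid_le) auto
  then show ?thesis
    using assms(3,4) by simp
qed

lemma piecewise_cell:
  assumes "j < l" "x \<in> cell j"
  shows "piecewise h x = h j x"
proof -
  have "h k x * indicator (cell k) x = (if k = j then h j x else 0)" if "k < l" for k
  proof (cases "k = j")
    case False
    then have "x \<notin> cell k"
      using cell_unique[OF that assms(1) _ assms(2)] by blast
    then show ?thesis
      using False by simp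
  qed (use assms(2) in simp)
  then have "piecewise h x = (\<Sum>k<l. if k = j then h j x else 0)"
    unfolding piecewise_def by (intro sum.cong) simp_all
  then show ?thesis
    using assms(1) by simp
qed

lemma piecewise_outside: "(\<And>j. j < l \<Longrightarrow> x \<notin> cell j) \<Longrightarrow> piecewise h x = 0"
  unfolding piecewise_def by (intro sum.neutral) simp

lemma piecewise_mult: "piecewise h x * piecewise k x = piecewise (\<lambda>j x. h j x * k j x) x"
proof (cases "\<exists>j<l. x \<in> cell j")
  case True
  then obtain j where "j < l" "x \<in> cell j"
    by blast
  then show ?thesis
    by (simp add: piecewise_cell)
qed (simp add: piecewise_outside)

lemma piecewise_lincomb: "piecewise h x + c * piecewise k x = piecewise (\<lambda>j x. h j x + c * k j x) x"
  unfolding piecewise_def sum_distrib_left sum.distrib[symmetric]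
  by (intro sum.cong) (simp_all add: algebra_simps)

lemma cell_subset: "j < l \<Longrightarrow> cell j \<subseteq> {\<gamma> 0..\<gamma> l}"
  using grid_le[of 0 j] grid_le[of "Suc j" l] by auto

lemma gint_piecewise:
  assumes "\<And>j. j < l \<Longrightarrow> continuous_on {\<gamma> j..\<gamma> (Suc j)} (h j)"
  shows "gint \<gamma> l (piecewise h) = (\<Sum>j<l. integral {\<gamma> j..\<gamma> (Suc j)} (h j))"
proof -
  have "indicator {\<gamma> 0..\<gamma> l} x * piecewise h x = (\<Sum>j<l. indicator (cell j) x * h j x)" for x
    unfolding piecewise_def sum_distrib_left
  proof (intro sum.cong refl)
    fix j assume "j \<in> {..<l}"
    then have "indicator {\<gamma> 0..\<gamma> l} x * indicator (cell j) x = (indicator (cell j) x :: real)"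
      using cell_subset[of j] by (auto simp: indicator_def)
    then show "indicator {\<gamma> 0..\<gamma> l} x * (h j x * indicator (cell j) x) = indicator (cell j) x * h j x"
      by (metis mult.commute mult.left_commute)
  qed
  then have "gint \<gamma> l (piecewise h) = (LINT x|lborel. (\<Sum>j<l. indicator (cell j) x * h j x))"
    unfolding gint_def set_lebesgue_integral_def by simp
  also have "\<dots> = (\<Sum>j<l. LINT x:cell j|lborel. h j x)"
    unfolding set_lebesgue_integral_def real_scaleR_def using set_integral_open_interval(1)[OF assms]
    by (intro Bochner_Integration.integral_sum) (simp add: set_integrable_def)
  also have "\<dots> = (\<Sum>j<l. integral {\<gamma> j..\<gamma> (Suc j)} (h j))"
    using set_integral_open_interval(2)[OF assms] by simp
  finally show ?thesis .
qed

definition piecewise_continuous :: "(real \<Rightarrow> real) set" where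
  "piecewise_continuous = {piecewise h |h. \<forall>j<l. continuous_on UNIV (h j)}"

definition ip :: "(real \<Rightarrow> real) \<Rightarrow> (real \<Rightarrow> real) \<Rightarrow> real" where
  "ip f g = gint \<gamma> l (\<lambda>x. f x * g x)"

lemma ip_commute: "ip f g = ip g f"
  unfolding ip_def by (simp add: mult.commute)

lemma ip_piecewise:
  assumes "\<And>j. j < l \<Longrightarrow> continuous_on UNIV (h j)" "\<And>j. j < l \<Longrightarrow> continuous_on UNIV (k j)"
  shows "ip (piecewise h) (piecewise k) = (\<Sum>j<l. integral {\<gamma> j..\<gamma> (Suc j)} (\<lambda>x. h j x * k j x))"
proof -
  have "continuous_on {\<gamma> j..\<gamma> (Suc j)} (\<lambda>x. h j x * k j x)" if "j < l" for j
    using assms[OF that] by (auto intro!: continuous_intros intro: continuous_on_subset)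
  then show ?thesis
    unfolding ip_def piecewise_mult by (rule gint_piecewise)
qed

lemma symmetric_bilinear_on_piecewise_continuous: "symmetric_bilinear_on piecewise_continuous ip"
  unfolding symmetric_bilinear_on_def
proof (intro conjI ballI allI)
  fix f g k c assume "f \<in> piecewise_continuous" "g \<in> piecewise_continuous" "k \<in> piecewise_continuous"
  then obtain hf hg hk where h: "\<And>j. j < l \<Longrightarrow> continuous_on UNIV (hf j)"
      "\<And>j. j < l \<Longrightarrow> continuous_on UNIV (hg j)" "\<And>j. j < l \<Longrightarrow> continuous_on UNIV (hk j)"
    and fgk: "f = piecewise hf" "g = piecewise hg" "k = piecewise hk"
    unfolding piecewise_continuous_def by blast
  have on_cells: "continuous_on {\<gamma> j..\<gamma> (Suc j)} (hf j)" "continuous_on {\<gamma> j..\<gamma> (Suc j)} (hg j)"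
    "continuous_on {\<gamma> j..\<gamma> (Suc j)} (hk j)" if "j < l" for j
    using h[OF that] by (auto intro: continuous_on_subset)
  have "(\<lambda>x. f x + c * g x) = piecewise (\<lambda>j x. hf j x + c * hg j x)"
    unfolding fgk by (rule ext) (rule piecewise_lincomb)
  then have "ip (\<lambda>x. f x + c * g x) k
      = (\<Sum>j<l. integral {\<gamma> j..\<gamma> (Suc j)} (\<lambda>x. (hf j x + c * hg j x) * hk j x))"
    unfolding fgk(3) using h by (simp add: ip_piecewise continuous_intros)
  also have "\<dots> = (\<Sum>j<l. integral {\<gamma> j..\<gamma> (Suc j)} (\<lambda>x. hf j x * hk j x)
      + c * integral {\<gamma> j..\<gamma> (Suc j)} (\<lambda>x. hg j x * hk j x))"
    using on_cells by (intro sum.cong refl integral_lincomb_mult) auto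
  also have "\<dots> = ip f k + c * ip g k"
    unfolding fgk using h by (simp add: ip_piecewise sum.distrib sum_distrib_left)
  finally show "ip (\<lambda>x. f x + c * g x) k = ip f k + c * ip g k" .
qed (rule ip_commute)

lemma positive_definite_on_piecewise_continuous: "positive_definite_on piecewise_continuous ip"
  unfolding positive_definite_on_def
proof (intro ballI impI)
  fix f assume "f \<in> piecewise_continuous" "f \<noteq> (\<lambda>x. 0)"
  then obtain h where h: "\<And>j. j < l \<Longrightarrow> continuous_on UNIV (h j)" and f: "f = piecewise h"
    unfolding piecewise_continuous_def by blast
  have cont: "continuous_on {\<gamma> j..\<gamma> (Suc j)} (h j)" if "j < l" for j
    using h[OF that] by (rule continuous_on_subset) simp
  have nonneg: "0 \<le> integral {\<gamma> j..\<gamma> (Suc j)} (\<lambda>x. h j x * h j x)" if "j < l" for j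
    using cont[OF that] by (intro integral_nonneg integrable_continuous_interval continuous_intros) auto
  have ip_eq: "ip f f = (\<Sum>j<l. integral {\<gamma> j..\<gamma> (Suc j)} (\<lambda>x. h j x * h j x))"
    unfolding f using h h by (rule ip_piecewise)
  have "ip f f \<noteq> 0"
  proof
    assume "ip f f = 0"
    then have "\<forall>j\<in>{..<l}. integral {\<gamma> j..\<gamma> (Suc j)} (\<lambda>x. h j x * h j x) = 0"
      using nonneg unfolding ip_eq by (subst sum_nonneg_eq_0_iff[symmetric]) auto
    then have "h j x = 0" if "j < l" "x \<in> cell j" for j x
      using that by (intro continuous_square_integral_eq_0[OF cont grid_less_Suc]) auto
    have "f x = 0" for x
    proof (cases "\<exists>j<l. x \<in> cell j")
      case True
      then obtain j where "j < l" "x \<in> cell j"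
        by blast
      then show ?thesis
        unfolding f by (simp add: piecewise_cell \<open>\<And>j x. j < l \<Longrightarrow> x \<in> cell j \<Longrightarrow> h j x = 0\<close>)
    qed (simp add: f piecewise_outside)
    then show False
      using \<open>f \<noteq> (\<lambda>x. 0)\<close> by auto
  qed
  moreover have "0 \<le> ip f f"
    unfolding ip_eq using nonneg by (intro sum_nonneg) simp
  ultimately show "0 < ip f f"
    by simp
qed

lemma rlim_piecewise:
  assumes "j < l" "continuous_on UNIV (h j)"
  shows "rlim (piecewise h) (\<gamma> j) = h j (\<gamma> j)"
proof -
  have "isCont (h j) (\<gamma> j)"
    using assms(2) by (simp add: continuous_on_eq_continuous_at)
  then have "(h j \<longlongrightarrow> h j (\<gamma> j)) (at_right (\<gamma> j))"
    unfolding isCont_def by (rule tendsto_within_subset) simp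
  moreover have "eventually (\<lambda>y. h j y = piecewise h y) (at_right (\<gamma> j))"
    using eventually_at_right_real[OF grid_less_Suc[OF assms(1)]]
    by eventually_elim (simp add: piecewise_cell[OF assms(1)])
  ultimately have "(piecewise h \<longlongrightarrow> h j (\<gamma> j)) (at_right (\<gamma> j))"
    by (rule Lim_transform_eventually)
  then show ?thesis
    unfolding rlim_def by (intro tendsto_Lim) simp_all
qed

lemma llim_piecewise:
  assumes "j < l" "continuous_on UNIV (h j)"
  shows "llim (piecewise h) (\<gamma> (Suc j)) = h j (\<gamma> (Suc j))"
proof -
  have "isCont (h j) (\<gamma> (Suc j))"
    using assms(2) by (simp add: continuous_on_eq_continuous_at)
  then have "(h j \<longlongrightarrow> h j (\<gamma> (Suc j))) (at_left (\<gamma> (Suc j)))"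
    unfolding isCont_def by (rule tendsto_within_subset) simp
  moreover have "eventually (\<lambda>y. h j y = piecewise h y) (at_left (\<gamma> (Suc j)))"
    using eventually_at_left_real[OF grid_less_Suc[OF assms(1)]]
    by eventually_elim (simp add: piecewise_cell[OF assms(1)])
  ultimately have "(piecewise h \<longlongrightarrow> h j (\<gamma> (Suc j))) (at_left (\<gamma> (Suc j)))"
    by (rule Lim_transform_eventually)
  then show ?thesis
    unfolding llim_def by (intro tendsto_Lim) simp_all
qed

lemma llim_piecewise_pred:
  assumes "0 < j" "j \<le> l" "continuous_on UNIV (h (j - 1))"
  shows "llim (piecewise h) (\<gamma> j) = h (j - 1) (\<gamma> j)"
  using llim_piecewise[of "j - 1" h] assms by simp

lemma uval_piecewise_interior:
  assumes "0 < j" "j < l" "\<And>k. k < l \<Longrightarrow> continuous_on UNIV (h k)"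
  shows "uval \<gamma> l (piecewise h) (\<gamma> j) = (h j (\<gamma> j) + h (j - 1) (\<gamma> j)) / 2"
proof -
  have "\<gamma> j \<noteq> \<gamma> 0" "\<gamma> j \<noteq> \<gamma> l"
    using grid_less[of 0 j] grid_less[of j l] assms(1,2) by auto
  then show ?thesis
    unfolding uval_def using assms rlim_piecewise llim_piecewise_pred by auto
qed

lemma uval_piecewise_first:
  assumes "0 < l" "\<And>k. k < l \<Longrightarrow> continuous_on UNIV (h k)"
  shows "uval \<gamma> l (piecewise h) (\<gamma> 0) = h 0 (\<gamma> 0)"
  unfolding uval_def using rlim_piecewise assms by simp

lemma uval_piecewise_last:
  assumes "0 < l" "\<And>k. k < l \<Longrightarrow> continuous_on UNIV (h k)"
  shows "uval \<gamma> l (piecewise h) (\<gamma> l) = h (l - 1) (\<gamma> l)"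
proof -
  have "\<gamma> l \<noteq> \<gamma> 0"
    using grid_less[of 0 l] assms(1) by simp
  then show ?thesis
    unfolding uval_def using llim_piecewise_pred[of l h] assms by simp
qed

lemma jump_piecewise:
  assumes "0 < j" "j < l" "\<And>k. k < l \<Longrightarrow> continuous_on UNIV (h k)"
  shows "jump (piecewise h) (\<gamma> j) = h j (\<gamma> j) - h (j - 1) (\<gamma> j)"
  unfolding jump_def using assms rlim_piecewise llim_piecewise_pred by simp

lemma pderiv_piecewise: "pderiv \<gamma> l (piecewise h) = piecewise (\<lambda>j. deriv (h j))"
proof
  fix x
  have "deriv (piecewise h) x * indicator (cell j) x = deriv (h j) x * indicator (cell j) x"
    if "j < l" for j
  proof (cases "x \<in> cell j")
    case True
    have "eventually (\<lambda>y. y \<in> cell j) (nhds x)"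
      using True by (intro eventually_nhds_in_open) auto
    then have "eventually (\<lambda>y. piecewise h y = h j y) (nhds x)"
      by eventually_elim (simp add: piecewise_cell[OF that])
    then have "deriv (piecewise h) x = deriv (h j) x"
      by (rule deriv_cong_ev) simp
    then show ?thesis
      by simp
  qed simp
  then show "pderiv \<gamma> l (piecewise h) x = piecewise (\<lambda>j. deriv (h j)) x"
    unfolding pderiv_def piecewise_def by (intro sum.cong) simp_all
qed

section \<open>The space of ultrafunctions at a level of the net\<close>

lemma UU_eq:
  "UU lam \<gamma> l = {f. \<exists>vs. (\<forall>j<l. vs j \<in> fspan lam \<and> vs j C1_differentiable_on UNIV) \<and> f = piecewise vs}"
  unfolding UU_def piecewise_def ..

lemma function_subspace_piecewise_continuous: "function_subspace piecewise_continuous"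
  unfolding function_subspace_def
proof (intro conjI ballI allI)
  have "(\<lambda>x. 0) = piecewise (\<lambda>j x. 0)"
    unfolding piecewise_def by simp
  then show "(\<lambda>x. 0) \<in> piecewise_continuous"
    unfolding piecewise_continuous_def by auto
  fix f g c assume "f \<in> piecewise_continuous" "g \<in> piecewise_continuous"
  then obtain hf hg where "\<forall>j<l. continuous_on UNIV (hf j)" "\<forall>j<l. continuous_on UNIV (hg j)"
    and fg: "f = piecewise hf" "g = piecewise hg"
    unfolding piecewise_continuous_def by blast
  moreover have "(\<lambda>x. f x + c * g x) = piecewise (\<lambda>j x. hf j x + c * hg j x)"
    unfolding fg piecewise_lincomb ..
  ultimately show "(\<lambda>x. f x + c * g x) \<in> piecewise_continuous"
    unfolding piecewise_continuous_def
    by (intro CollectI exI[of _ "\<lambda>j x. hf j x + c * hg j x"]) (auto intro!: continuous_intros)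
qed

lemma UU_subset_piecewise_continuous: "UU lam \<gamma> l \<subseteq> piecewise_continuous"
  unfolding UU_eq piecewise_continuous_def using C1_differentiable_on_UNIV_D(1) by blast

lemma function_subspace_UU:
  assumes "finite lam"
  shows "function_subspace (UU lam \<gamma> l)"
  unfolding function_subspace_def
proof (intro conjI ballI allI)
  have span: "function_subspace (fspan lam)"
    unfolding fspan_eq_fun_span[OF assms] by (rule function_subspace_fun_span)
  have "(\<lambda>x. 0) = piecewise (\<lambda>j x. 0)"
    unfolding piecewise_def by simp
  then show "(\<lambda>x. 0) \<in> UU lam \<gamma> l"
    unfolding UU_eq using function_subspace_zero[OF span]
    by (intro CollectI exI[of _ "\<lambda>j x. 0"]) simp
  fix f g c assume "f \<in> UU lam \<gamma> l" "g \<in> UU lam \<gamma> l"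
  then obtain vs ws where vs: "\<forall>j<l. vs j \<in> fspan lam \<and> vs j C1_differentiable_on UNIV" "f = piecewise vs"
    and ws: "\<forall>j<l. ws j \<in> fspan lam \<and> ws j C1_differentiable_on UNIV" "g = piecewise ws"
    unfolding UU_eq by blast
  have "(\<lambda>x. vs j x + c * ws j x) \<in> fspan lam \<and> (\<lambda>x. vs j x + c * ws j x) C1_differentiable_on UNIV"
    if "j < l" for j
    using vs(1) ws(1) that function_subspace_lincomb[OF span] by simp
  then show "(\<lambda>x. f x + c * g x) \<in> UU lam \<gamma> l"
    unfolding UU_eq vs(2) ws(2) piecewise_lincomb
    by (intro CollectI exI[of _ "\<lambda>j x. vs j x + c * ws j x"]) simp
qed

lemma UU_subset_fun_span:
  assumes "finite lam"
  shows "UU lam \<gamma> l \<subseteq> fun_span ({..<l} \<times> lam) (\<lambda>(j, g) x. g x * indicator (cell j) x)"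
proof
  fix f assume "f \<in> UU lam \<gamma> l"
  then obtain vs where vs: "\<forall>j<l. vs j \<in> fun_span lam (\<lambda>g. g)" "f = piecewise vs"
    unfolding UU_eq fspan_eq_fun_span[OF assms] by blast
  have "\<forall>j\<in>{..<l}. \<exists>c. vs j = (\<lambda>x. \<Sum>g\<in>lam. c g * g x)"
    using vs(1) unfolding fun_span_def by simp
  then obtain c where c: "\<And>j. j < l \<Longrightarrow> vs j = (\<lambda>x. \<Sum>g\<in>lam. c j g * g x)"
    by (subst (asm) bchoice_iff) auto
  have "f x = (\<Sum>j<l. \<Sum>g\<in>lam. c j g * (g x * indicator (cell j) x))" for x
    unfolding vs(2) piecewise_def using c by (simp add: sum_distrib_right mult.assoc)
  then have "f = (\<lambda>x. \<Sum>p\<in>{..<l} \<times> lam. c (fst p) (snd p) * (case p of (j, g) \<Rightarrow> \<lambda>x. g x * indicator (cell j) x) x)"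
    by (intro ext) (simp add: sum.cartesian_product case_prod_unfold)
  then show "f \<in> fun_span ({..<l} \<times> lam) (\<lambda>(j, g) x. g x * indicator (cell j) x)"
    unfolding fun_span_def by (intro CollectI exI[of _ "\<lambda>p. c (fst p) (snd p)"])
qed

lemma symmetric_bilinear_on_UU: "symmetric_bilinear_on (UU lam \<gamma> l) ip"
  using symmetric_bilinear_on_piecewise_continuous UU_subset_piecewise_continuous by (rule symmetric_bilinear_on_subset)

lemma riesz_representation_UU:
  assumes "finite lam" "linear_functional_on (UU lam \<gamma> l) L"
  shows "(THE d. d \<in> UU lam \<gamma> l \<and> (\<forall>w\<in>UU lam \<gamma> l. ip w d = L w)) \<in> UU lam \<gamma> l"
    "\<And>w. w \<in> UU lam \<gamma> l \<Longrightarrow> ip w (THE d. d \<in> UU lam \<gamma> l \<and> (\<forall>w\<in>UU lam \<gamma> l. ip w d = L w)) = L w"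
proof -
  have "finite ({..<l} \<times> lam)"
    using assms(1) by simp
  moreover note UU_subset_fun_span[OF assms(1)] function_subspace_UU[OF assms(1)]
  moreover note symmetric_bilinear_on_UU
  moreover have "positive_definite_on (UU lam \<gamma> l) ip"
    using positive_definite_on_piecewise_continuous UU_subset_piecewise_continuous by (rule positive_definite_on_subset)
  ultimately show "(THE d. d \<in> UU lam \<gamma> l \<and> (\<forall>w\<in>UU lam \<gamma> l. ip w d = L w)) \<in> UU lam \<gamma> l"
    "\<And>w. w \<in> UU lam \<gamma> l \<Longrightarrow> ip w (THE d. d \<in> UU lam \<gamma> l \<and> (\<forall>w\<in>UU lam \<gamma> l. ip w d = L w)) = L w"
    using the_riesz_representation[OF _ _ _ _ _ assms(2)] by blast+
qed

lemma linear_functional_on_uval: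
  assumes "0 < j" "j < l"
  shows "linear_functional_on (UU lam \<gamma> l) (\<lambda>w. uval \<gamma> l w (\<gamma> j))"
  unfolding linear_functional_on_def
proof (intro ballI allI)
  fix f g c assume "f \<in> UU lam \<gamma> l" "g \<in> UU lam \<gamma> l"
  then obtain hf hg where h: "\<And>k. k < l \<Longrightarrow> continuous_on UNIV (hf k)"
      "\<And>k. k < l \<Longrightarrow> continuous_on UNIV (hg k)" and fg: "f = piecewise hf" "g = piecewise hg"
    using UU_subset_piecewise_continuous unfolding piecewise_continuous_def by blast
  have "(\<lambda>x. f x + c * g x) = piecewise (\<lambda>k x. hf k x + c * hg k x)"
    unfolding fg piecewise_lincomb ..
  moreover have "\<And>k. k < l \<Longrightarrow> continuous_on UNIV (\<lambda>x. hf k x + c * hg k x)"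
    using h by (auto intro!: continuous_intros)
  ultimately have "uval \<gamma> l (\<lambda>x. f x + c * g x) (\<gamma> j)
      = (hf j (\<gamma> j) + c * hg j (\<gamma> j) + (hf (j - 1) (\<gamma> j) + c * hg (j - 1) (\<gamma> j))) / 2"
    by (simp add: uval_piecewise_interior[OF assms])
  moreover have "uval \<gamma> l f (\<gamma> j) = (hf j (\<gamma> j) + hf (j - 1) (\<gamma> j)) / 2"
    unfolding fg by (rule uval_piecewise_interior[OF assms h(1)])
  moreover have "uval \<gamma> l g (\<gamma> j) = (hg j (\<gamma> j) + hg (j - 1) (\<gamma> j)) / 2"
    unfolding fg by (rule uval_piecewise_interior[OF assms h(2)])
  ultimately show "uval \<gamma> l (\<lambda>x. f x + c * g x) (\<gamma> j) = uval \<gamma> l f (\<gamma> j) + c * uval \<gamma> l g (\<gamma> j)"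
    by (simp add: algebra_simps add_divide_distrib)
qed

lemma delta_representer:
  assumes "finite lam" "0 < j" "j < l"
  shows "delta lam \<gamma> l (\<gamma> j) \<in> UU lam \<gamma> l"
    "\<And>w. w \<in> UU lam \<gamma> l \<Longrightarrow> ip w (delta lam \<gamma> l (\<gamma> j)) = uval \<gamma> l w (\<gamma> j)"
  unfolding delta_def ip_def[symmetric]
  using riesz_representation_UU[OF assms(1) linear_functional_on_uval[OF assms(2,3)]] by blast+

lemma projU_representer:
  assumes "finite lam" "w \<in> piecewise_continuous"
  shows "projU lam \<gamma> l w \<in> UU lam \<gamma> l"
    "\<And>v. v \<in> UU lam \<gamma> l \<Longrightarrow> ip (projU lam \<gamma> l w) v = ip w v"
proof -
  have "linear_functional_on (UU lam \<gamma> l) (ip w)"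
    unfolding linear_functional_on_def
    using symmetric_bilinear_on_right[OF symmetric_bilinear_on_piecewise_continuous function_subspace_piecewise_continuous _ _ assms(2)]
      UU_subset_piecewise_continuous by blast
  note R = riesz_representation_UU[OF assms(1) this]
  have "projU lam \<gamma> l w = (THE p. p \<in> UU lam \<gamma> l \<and> (\<forall>v\<in>UU lam \<gamma> l. ip v p = ip w v))"
    unfolding projU_def ip_def by (simp add: mult.commute)
  then show "projU lam \<gamma> l w \<in> UU lam \<gamma> l" "\<And>v. v \<in> UU lam \<gamma> l \<Longrightarrow> ip (projU lam \<gamma> l w) v = ip w v"
    using R ip_commute by auto
qed

subsection \<open>Integration by parts\<close>

lemma pderiv_in_piecewise_continuous:
  assumes "u \<in> UU lam \<gamma> l"
  shows "pderiv \<gamma> l u \<in> piecewise_continuous"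
proof -
  obtain vs where "\<forall>j<l. vs j C1_differentiable_on UNIV" and u: "u = piecewise vs"
    using assms unfolding UU_eq by blast
  then show ?thesis
    unfolding piecewise_continuous_def u pderiv_piecewise using C1_differentiable_on_UNIV_D(2)
    by (intro CollectI exI[of _ "\<lambda>j. deriv (vs j)"]) simp
qed

lemma ip_DD:
  assumes "finite lam" "u \<in> UU lam \<gamma> l" "v \<in> UU lam \<gamma> l"
  shows "ip (DD lam \<gamma> l u) v = ip (pderiv \<gamma> l u) v + (\<Sum>j\<in>{1..<l}. jump u (\<gamma> j) * uval \<gamma> l v (\<gamma> j))"
proof -
  note P = projU_representer[OF assms(1) pderiv_in_piecewise_continuous[OF assms(2)]]
  have "ip (DD lam \<gamma> l u) v = ip (projU lam \<gamma> l (pderiv \<gamma> l u)) v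
      + (\<Sum>j\<in>{1..<l}. jump u (\<gamma> j) * ip (delta lam \<gamma> l (\<gamma> j)) v)"
    unfolding DD_def
    using function_subspace_UU[OF assms(1)] symmetric_bilinear_on_UU _ P(1) _ assms(3)
    by (rule symmetric_bilinear_on_sum_left) (auto intro: delta_representer(1)[OF assms(1)])
  also have "\<dots> = ip (pderiv \<gamma> l u) v + (\<Sum>j\<in>{1..<l}. jump u (\<gamma> j) * uval \<gamma> l v (\<gamma> j))"
    using P(2)[OF assms(3)] delta_representer(2)[OF assms(1) _ _ assms(3)] by (simp add: ip_commute)
  finally show ?thesis .
qed

lemma ip_DD_piecewise:
  assumes "finite lam" "piecewise a \<in> UU lam \<gamma> l" "piecewise b \<in> UU lam \<gamma> l"
    and a: "\<And>j. j < l \<Longrightarrow> a j C1_differentiable_on UNIV"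
    and b: "\<And>j. j < l \<Longrightarrow> b j C1_differentiable_on UNIV"
  shows "ip (DD lam \<gamma> l (piecewise a)) (piecewise b)
    = (\<Sum>j<l. integral {\<gamma> j..\<gamma> (Suc j)} (\<lambda>x. deriv (a j) x * b j x))
    + (\<Sum>j\<in>{1..<l}. (a j (\<gamma> j) - a (j - 1) (\<gamma> j)) * ((b j (\<gamma> j) + b (j - 1) (\<gamma> j)) / 2))"
proof -
  note a' = C1_differentiable_on_UNIV_D[OF a] and b' = C1_differentiable_on_UNIV_D[OF b]
  have "ip (pderiv \<gamma> l (piecewise a)) (piecewise b)
      = (\<Sum>j<l. integral {\<gamma> j..\<gamma> (Suc j)} (\<lambda>x. deriv (a j) x * b j x))"
    unfolding pderiv_piecewise using a'(2) b'(1) by (rule ip_piecewise)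
  moreover have "(\<Sum>j\<in>{1..<l}. jump (piecewise a) (\<gamma> j) * uval \<gamma> l (piecewise b) (\<gamma> j))
      = (\<Sum>j\<in>{1..<l}. (a j (\<gamma> j) - a (j - 1) (\<gamma> j)) * ((b j (\<gamma> j) + b (j - 1) (\<gamma> j)) / 2))"
    using jump_piecewise[OF _ _ a'(1)] uval_piecewise_interior[OF _ _ b'(1)] by (intro sum.cong) auto
  ultimately show ?thesis
    using ip_DD[OF assms(1-3)] by simp
qed

lemma integration_by_parts_UU:
  assumes "finite lam" "0 < l" "u \<in> UU lam \<gamma> l" "v \<in> UU lam \<gamma> l"
  shows "ip (DD lam \<gamma> l u) v = - ip u (DD lam \<gamma> l v)
    + (uval \<gamma> l u (\<gamma> l) * uval \<gamma> l v (\<gamma> l) - uval \<gamma> l u (\<gamma> 0) * uval \<gamma> l v (\<gamma> 0))"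
proof -
  obtain a where a: "\<And>j. j < l \<Longrightarrow> a j C1_differentiable_on UNIV" and u: "u = piecewise a"
    using assms(3) unfolding UU_eq by blast
  obtain b where b: "\<And>j. j < l \<Longrightarrow> b j C1_differentiable_on UNIV" and v: "v = piecewise b"
    using assms(4) unfolding UU_eq by blast
  note a' = C1_differentiable_on_UNIV_D[OF a] and b' = C1_differentiable_on_UNIV_D[OF b]
  define S where "S j = a j (\<gamma> j) * b j (\<gamma> j)" for j
  define E where "E j = a j (\<gamma> (Suc j)) * b j (\<gamma> (Suc j))" for j
  have cells: "(\<Sum>j<l. integral {\<gamma> j..\<gamma> (Suc j)} (\<lambda>x. deriv (a j) x * b j x))
      + (\<Sum>j<l. integral {\<gamma> j..\<gamma> (Suc j)} (\<lambda>x. deriv (b j) x * a j x)) = (\<Sum>j<l. E j - S j)"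
    unfolding sum.distrib[symmetric] E_def S_def
    using grid_less_Suc[THEN less_imp_le] a b by (intro sum.cong refl integral_deriv_mult_add) auto
  have "(a j (\<gamma> j) - a (j - 1) (\<gamma> j)) * ((b j (\<gamma> j) + b (j - 1) (\<gamma> j)) / 2)
      + (b j (\<gamma> j) - b (j - 1) (\<gamma> j)) * ((a j (\<gamma> j) + a (j - 1) (\<gamma> j)) / 2) = S j - E (j - 1)"
    if "j \<in> {1..<l}" for j
    using that unfolding S_def E_def by (simp add: field_simps)
  then have jumps: "(\<Sum>j\<in>{1..<l}. (a j (\<gamma> j) - a (j - 1) (\<gamma> j)) * ((b j (\<gamma> j) + b (j - 1) (\<gamma> j)) / 2))
      + (\<Sum>j\<in>{1..<l}. (b j (\<gamma> j) - b (j - 1) (\<gamma> j)) * ((a j (\<gamma> j) + a (j - 1) (\<gamma> j)) / 2))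
      = (\<Sum>j\<in>{1..<l}. S j - E (j - 1))"
    unfolding sum.distrib[symmetric] by (rule sum.cong[OF refl])
  obtain m where m: "l = Suc m"
    using assms(2) by (cases l) auto
  have "uval \<gamma> l u (\<gamma> l) * uval \<gamma> l v (\<gamma> l) - uval \<gamma> l u (\<gamma> 0) * uval \<gamma> l v (\<gamma> 0)
      = a (l - 1) (\<gamma> l) * b (l - 1) (\<gamma> l) - a 0 (\<gamma> 0) * b 0 (\<gamma> 0)"
    unfolding u v
    by (simp only: uval_piecewise_first[where h = a, OF assms(2) a'(1)]
      uval_piecewise_first[where h = b, OF assms(2) b'(1)]
      uval_piecewise_last[where h = a, OF assms(2) a'(1)]
      uval_piecewise_last[where h = b, OF assms(2) b'(1)])
  then have ends: "E (l - 1) - S 0 = uval \<gamma> l u (\<gamma> l) * uval \<gamma> l v (\<gamma> l) - uval \<gamma> l u (\<gamma> 0) * uval \<gamma> l v (\<gamma> 0)"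
    unfolding E_def S_def using m by simp
  show ?thesis
    using ip_DD_piecewise[OF assms(1) assms(3,4)[unfolded u v] a b]
      ip_DD_piecewise[OF assms(1) assms(4,3)[unfolded u v] b a]
      cells jumps sum_interleaved_telescope[where E = E and S = S and m = m] ends m
    unfolding u v ip_commute[of "piecewise a"] by simp
qed

end

theorem mainTheorem10:
  fixes \<beta> \<eta> :: "idx \<Rightarrow> real" and \<gamma> :: "idx \<Rightarrow> nat \<Rightarrow> real" and l :: "idx \<Rightarrow> nat"
    and u v :: "idx \<Rightarrow> real \<Rightarrow> real"
  assumes "grid_ok \<beta> \<eta> \<gamma> l"
    and "eventually (\<lambda>a. u a \<in> UU a (\<gamma> a) (l a)) Lam"
    and "eventually (\<lambda>a. v a \<in> UU a (\<gamma> a) (l a)) Lam"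
  shows "eventually (\<lambda>a.
     gint (\<gamma> a) (l a) (\<lambda>x. DD a (\<gamma> a) (l a) (u a) x * v a x) =
       - gint (\<gamma> a) (l a) (\<lambda>x. u a x * DD a (\<gamma> a) (l a) (v a) x)
       + (uval (\<gamma> a) (l a) (u a) (\<beta> a) * uval (\<gamma> a) (l a) (v a) (\<beta> a)
          - uval (\<gamma> a) (l a) (u a) (- \<beta> a) * uval (\<gamma> a) (l a) (v a) (- \<beta> a))) Lam"
proof -
  have "eventually (\<lambda>a. \<gamma> a 0 = - \<beta> a \<and> \<gamma> a (l a) = \<beta> a \<and>
      (\<forall>j<l a. 0 < \<gamma> a (Suc j) - \<gamma> a j \<and> \<gamma> a (Suc j) - \<gamma> a j < \<eta> a)) Lam"
    and "eventually (\<lambda>a. real 0 < \<beta> a) Lam"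
    using assms(1) unfolding grid_ok_def by (blast, blast)
  with assms(2,3) eventually_finite_Lam show ?thesis
  proof eventually_elim
    case (elim a)
    then have grid: "grid (\<gamma> a) (l a)"
      by unfold_locales simp
    moreover have "0 < l a"
      using elim by (intro gr0I) auto
    ultimately have "grid.ip (\<gamma> a) (l a) (DD a (\<gamma> a) (l a) (u a)) (v a)
        = - grid.ip (\<gamma> a) (l a) (u a) (DD a (\<gamma> a) (l a) (v a))
          + (uval (\<gamma> a) (l a) (u a) (\<gamma> a (l a)) * uval (\<gamma> a) (l a) (v a) (\<gamma> a (l a))
            - uval (\<gamma> a) (l a) (u a) (\<gamma> a 0) * uval (\<gamma> a) (l a) (v a) (\<gamma> a 0))"
      using elim by (intro grid.integration_by_parts_UU) auto
    then show ?case
      using elim by (simp add: grid.ip_def[OF grid])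
  qed
qed

end
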